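(* Let $m\geq 1$ and let $\Lambda_m\supseteq\Delta_m$ be the lattices in $\mathbb{R}^{2^m}$ defined below. Let $\ell\in\Lambda_m$ be a minimal vector, i.e. $(\ell,\ell)=2^{m-1}$. Then for every $x\in \ell+\Delta_m$ either $(x,x)=(\ell,\ell)=2^{m-1}$ or $(x,x)\geq 2^m$.
   Context: Let $\mathcal{V}_m=\mathbb{F}_2^m$. Let $(e_v\mid v\in\mathcal{V}_m)$ be an orthonormal basis of Euclidean space $(\mathbb{R}^{2^m},(\cdot,\cdot))$ indexed by the elements of $\mathcal{V}_m$. For a subset $\mathcal{U}\subseteq\mathcal{V}_m$ put $x_{\mathcal{U}}=\sum_{v\in\mathcal{U}}e_v$. Define $\Lambda_m=\langle 2^{\lfloor (m-r)/2\rfloor}x_{\mathcal{U}} \mid 0\le r\le m,\ \mathcal{U}\text{ an affine subspace of }\mathcal{V}_m\text{ of dimension }r\rangle_{\mathbb{Z}}$ and $\Delta_m=\langle 2^{\lfloor (m-r+1)/2\rfloor}x_{\mathcal{U}} \mid 0\le r\le m,\ \mathcal{U}\text{ an affine subspace of }\mathcal{V}_m\text{ of dimension }r\rangle_{\mathbb{Z}}$ (the Barnes–Wall lattices). The minimum (smallest nonzero value of $(x,x)$) of $\Lambda_m$ is $2^{m-1}$ and that of $\Delta_m$ is $2^m$; a minimal vector is a vector attaining the minimum. *)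

theory Defs
  imports Complex_Main
begin

text \<open>The space V_m = F_2^m, modelled as boolean lists of length m; addition is xor.\<close>
definition Vsp :: "nat \<Rightarrow> bool list set" where
  "Vsp m = {v. length v = m}"

definition vadd :: "bool list \<Rightarrow> bool list \<Rightarrow> bool list" where
  "vadd u w = map2 (\<noteq>) u w"

definition lin_subspace :: "nat \<Rightarrow> bool list set \<Rightarrow> bool" where
  "lin_subspace m W \<longleftrightarrow> W \<subseteq> Vsp m \<and> replicate m False \<in> W \<and>
     (\<forall>u\<in>W. \<forall>w\<in>W. vadd u w \<in> W)"

definition affine_subspace :: "nat \<Rightarrow> nat \<Rightarrow> bool list set \<Rightarrow> bool" where
  "affine_subspace m r U \<longleftrightarrow> (\<exists>a W. a \<in> Vsp m \<and> lin_subspace m W \<and> card W = 2 ^ r \<and>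
      U = vadd a ` W)"

text \<open>Vectors of R^(2^m) with orthonormal basis (e_v | v in V_m): real functions on V_m,
  zero outside V_m.  x_U is the indicator vector of U.\<close>
definition xvec :: "bool list set \<Rightarrow> bool list \<Rightarrow> real" where
  "xvec U = (\<lambda>v. if v \<in> U then 1 else 0)"

definition inner_V :: "nat \<Rightarrow> (bool list \<Rightarrow> real) \<Rightarrow> (bool list \<Rightarrow> real) \<Rightarrow> real" where
  "inner_V m x y = (\<Sum>v\<in>Vsp m. x v * y v)"

inductive_set int_span :: "(bool list \<Rightarrow> real) set \<Rightarrow> (bool list \<Rightarrow> real) set"
  for S :: "(bool list \<Rightarrow> real) set" where
  zero: "(\<lambda>_. 0) \<in> int_span S"
| add: "x \<in> int_span S \<Longrightarrow> g \<in> S \<Longrightarrow> (\<lambda>v. x v + g v) \<in> int_span S"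
| sub: "x \<in> int_span S \<Longrightarrow> g \<in> S \<Longrightarrow> (\<lambda>v. x v - g v) \<in> int_span S"

definition Lambda_BW :: "nat \<Rightarrow> (bool list \<Rightarrow> real) set" where
  "Lambda_BW m = int_span {(\<lambda>v. 2 ^ ((m - r) div 2) * xvec U v) | r U.
      r \<le> m \<and> affine_subspace m r U}"

definition Delta_BW :: "nat \<Rightarrow> (bool list \<Rightarrow> real) set" where
  "Delta_BW m = int_span {(\<lambda>v. 2 ^ ((m - r + 1) div 2) * xvec U v) | r U.
      r \<le> m \<and> affine_subspace m r U}"

end

(*
  Lambda_m and Delta_m lie in the lattices BW 0 m and BW 1 m of a family BW j k built by the
  (u | u + v) construction; BW j k has minimum 2^(j + k) / 2, and BW (j + 2) k = 2 BW j k.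
  The gap is proved for every BW j k by induction on k, splitting l = (a, a') and
  l + d = (p, q). If a or a' vanishes, the other half is minimal in BW (j + 1) k and the
  induction hypothesis at level j + 1 applies. Otherwise a and a' are minimal in BW j k, and by
  induction |p|^2 and |q|^2 are each either min or at least 2 min. In the remaining case
  |p|^2 = min < |q|^2, p is the image of a under an isometry g fixing each BW i k modulo
  BW (i + 1) k (these isometries act transitively on the minimal vectors of a coset of
  BW (j + 1) k, by a parallel induction), so q lies in g a' + 2 BW j k and the parallelogram
  law gives |q|^2 >= 3 min.
*)

theory Submission
  imports Defs "HOL-Library.Function_Algebras"
begin

subsection \<open>The lattices \<open>BW j k\<close>\<close>

type_synonym vec = "bool list \<Rightarrow> real"

definition slice :: "bool \<Rightarrow> vec \<Rightarrow> vec" where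
  "slice b x = (\<lambda>w. x (b # w))"

definition join_halves :: "vec \<Rightarrow> vec \<Rightarrow> vec" where
  "join_halves y z = (\<lambda>v. case v of [] \<Rightarrow> 0 | b # w \<Rightarrow> if b then z w else y w)"

lemma slice_apply [simp]: "slice b x w = x (b # w)"
  by (simp add: slice_def)

lemma slice_arith [simp]:
  "slice b 0 = 0" "slice b (- x) = - slice b x" "slice b (2 * x) = 2 * slice b x"
  "slice b (x + y) = slice b x + slice b y" "slice b (x - y) = slice b x - slice b y"
  by (auto simp: slice_def)

lemma slice_join_halves [simp]:
  "slice False (join_halves y z) = y" "slice True (join_halves y z) = z" "join_halves y z [] = 0"
  by (auto simp: slice_def join_halves_def)

lemma join_halves_arith [simp]:
  "join_halves 0 0 = 0"
  "join_halves y z + join_halves y' z' = join_halves (y + y') (z + z')"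
  "join_halves y z - join_halves y' z' = join_halves (y - y') (z - z')"
  "- join_halves y z = join_halves (- y) (- z)"
  by (auto simp: join_halves_def fun_eq_iff split: list.split)

lemma join_halves_slices:
  assumes "x [] = 0"
  shows "join_halves (slice False x) (slice True x) = x"
proof
  fix v show "join_halves (slice False x) (slice True x) v = x v"
    using assms by (cases v) (auto simp: join_halves_def)
qed

(* The halves of a vector on V_(k+1) are its restrictions to first coordinate False and True;
   the elements of BW j k vanish outside V_k. *)
fun BW :: "nat \<Rightarrow> nat \<Rightarrow> vec set" where
  "BW j 0 = {x. \<exists>n::int. x = (\<lambda>v. if v = [] then 2 ^ (j div 2) * of_int n else 0)}"
| "BW j (Suc k) = {x. x [] = 0 \<and> slice False x \<in> BW j k \<and> slice True x \<in> BW j k \<and>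
      slice True x - slice False x \<in> BW (Suc j) k}"

lemma join_halves_in_BW_iff [simp]:
  "join_halves y z \<in> BW j (Suc k) \<longleftrightarrow> y \<in> BW j k \<and> z \<in> BW j k \<and> z - y \<in> BW (Suc j) k"
  by simp

lemma BW_SucE:
  assumes "x \<in> BW j (Suc k)"
  obtains y z where "x = join_halves y z" "y \<in> BW j k" "z \<in> BW j k" "z - y \<in> BW (Suc j) k"
  using assms that[of "slice False x" "slice True x"] by (simp add: join_halves_slices)

lemma zero_in_BW [simp]: "0 \<in> BW j k"
proof (induction k arbitrary: j)
  case 0
  show ?case by (auto intro!: exI[of _ 0])
next
  case (Suc k)
  then show ?case by (metis join_halves_arith(1) join_halves_in_BW_iff diff_zero)
qed

lemma BW_add: "x \<in> BW j k \<Longrightarrow> y \<in> BW j k \<Longrightarrow> x + y \<in> BW j k"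
proof (induction k arbitrary: j x y)
  case 0
  then obtain n n' :: int where "x = (\<lambda>v. if v = [] then 2 ^ (j div 2) * of_int n else 0)"
    "y = (\<lambda>v. if v = [] then 2 ^ (j div 2) * of_int n' else 0)" by auto
  then show ?case by (auto simp: algebra_simps intro!: exI[of _ "n + n'"])
next
  case (Suc k)
  obtain u v u' v' where x: "x = join_halves u v" "u \<in> BW j k" "v \<in> BW j k" "v - u \<in> BW (Suc j) k"
    and y: "y = join_halves u' v'" "u' \<in> BW j k" "v' \<in> BW j k" "v' - u' \<in> BW (Suc j) k"
    using Suc.prems by (elim BW_SucE)
  have "(v + v') - (u + u') = (v - u) + (v' - u')" by (simp add: algebra_simps)
  then have "(v + v') - (u + u') \<in> BW (Suc j) k" using Suc.IH[OF x(4) y(4)] by (simp only:)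
  then show ?case unfolding x(1) y(1) join_halves_arith join_halves_in_BW_iff
    using Suc.IH[OF x(2) y(2)] Suc.IH[OF x(3) y(3)] by blast
qed

lemma BW_uminus: "x \<in> BW j k \<Longrightarrow> - x \<in> BW j k"
proof (induction k arbitrary: j x)
  case 0
  then obtain n :: int where "x = (\<lambda>v. if v = [] then 2 ^ (j div 2) * of_int n else 0)" by auto
  then show ?case by (auto intro!: exI[of _ "- n"])
next
  case (Suc k)
  obtain u v where x: "x = join_halves u v" "u \<in> BW j k" "v \<in> BW j k" "v - u \<in> BW (Suc j) k"
    using Suc.prems by (elim BW_SucE)
  have "- v - - u = - (v - u)" by simp
  then show ?case using x Suc.IH[OF x(2)] Suc.IH[OF x(3)] Suc.IH[OF x(4)]
    by (simp only: join_halves_arith join_halves_in_BW_iff)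
qed

lemma BW_uminus_iff [simp]: "- x \<in> BW j k \<longleftrightarrow> x \<in> BW j k"
  using BW_uminus[of x] BW_uminus[of "- x"] by auto

lemma BW_diff_commute: "y - x \<in> BW j k \<longleftrightarrow> x - y \<in> BW j k"
  using BW_uminus_iff[of "x - y"] by simp

lemma BW_diff: "x \<in> BW j k \<Longrightarrow> y \<in> BW j k \<Longrightarrow> x - y \<in> BW j k"
  using BW_add[of x j k "- y"] by simp

lemma BW_Suc_subset: "x \<in> BW (Suc j) k \<Longrightarrow> x \<in> BW j k"
proof (induction k arbitrary: j x)
  case 0
  then obtain n :: int where n: "x = (\<lambda>v. if v = [] then 2 ^ (Suc j div 2) * of_int n else 0)"
    by auto
  show ?case
  proof (cases "even j")
    case True
    then have "Suc j div 2 = j div 2" by presburger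
    with n show ?thesis by (auto intro!: exI[of _ n])
  next
    case False
    then have "Suc j div 2 = Suc (j div 2)" by presburger
    with n show ?thesis by (auto intro!: exI[of _ "2 * n"])
  qed
next
  case (Suc k)
  then show ?case by (auto elim!: BW_SucE)
qed

lemma double_in_BW_iff: "2 * x \<in> BW (Suc (Suc j)) k \<longleftrightarrow> x \<in> BW j k"
proof (induction k arbitrary: j x)
  case 0
  have "Suc (Suc j) div 2 = Suc (j div 2)" by presburger
  then show ?case by (auto simp: fun_eq_iff)
next
  case (Suc k)
  have "2 * x \<in> BW (Suc (Suc j)) (Suc k) \<longleftrightarrow> x [] = 0 \<and>
      2 * slice False x \<in> BW (Suc (Suc j)) k \<and> 2 * slice True x \<in> BW (Suc (Suc j)) k \<and>
      2 * (slice True x - slice False x) \<in> BW (Suc (Suc (Suc j))) k"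
    by (simp add: right_diff_distrib)
  also have "\<dots> \<longleftrightarrow> x \<in> BW j (Suc k)"
    by (simp only: Suc.IH BW.simps mem_Collect_eq)
  finally show ?case .
qed

lemma double_in_BW_Suc: "x \<in> BW j k \<Longrightarrow> 2 * x \<in> BW (Suc j) k"
  using BW_Suc_subset double_in_BW_iff by blast

lemma BW_halve:
  assumes "y \<in> BW (Suc (Suc j)) k"
  obtains z where "z \<in> BW j k" "y = 2 * z"
proof
  show "y = 2 * (\<lambda>v. y v / 2)" by (simp add: fun_eq_iff)
  then show "(\<lambda>v. y v / 2) \<in> BW j k" using assms double_in_BW_iff by metis
qed


subsection \<open>Norms and minimal vectors\<close>

definition sqnorm :: "nat \<Rightarrow> vec \<Rightarrow> real" where
  "sqnorm k x = inner_V k x x"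

lemma Vsp_Suc: "Vsp (Suc k) = Cons False ` Vsp k \<union> Cons True ` Vsp k"
proof -
  have "v \<in> Cons False ` Vsp k \<union> Cons True ` Vsp k" if "v \<in> Vsp (Suc k)" for v
    using that by (cases v) (auto simp: Vsp_def image_iff)
  then show ?thesis by (auto simp: Vsp_def)
qed

lemma finite_Vsp [simp]: "finite (Vsp k)"
  by (induction k) (simp_all add: Vsp_Suc, simp add: Vsp_def)

lemma card_Vsp: "card (Vsp k) = 2 ^ k"
proof (induction k)
  case 0
  then show ?case by (simp add: Vsp_def)
next
  case (Suc k)
  have "card (Vsp (Suc k)) = card (Cons False ` Vsp k) + card (Cons True ` Vsp k)"
    unfolding Vsp_Suc by (rule card_Un_disjoint) auto
  with Suc show ?case by (simp add: card_image)
qed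

lemma inner_V_Suc:
  "inner_V (Suc k) x y =
    inner_V k (slice False x) (slice False y) + inner_V k (slice True x) (slice True y)"
  unfolding inner_V_def Vsp_Suc
  by (subst sum.union_disjoint) (auto simp: sum.reindex)

lemma sqnorm_Suc: "sqnorm (Suc k) x = sqnorm k (slice False x) + sqnorm k (slice True x)"
  by (simp add: sqnorm_def inner_V_Suc)

lemma sqnorm_join_halves [simp]: "sqnorm (Suc k) (join_halves y z) = sqnorm k y + sqnorm k z"
  by (simp add: sqnorm_Suc)

lemma sqnorm_0: "sqnorm 0 x = (x [])\<^sup>2"
  by (simp add: sqnorm_def inner_V_def Vsp_def power2_eq_square)

lemma sqnorm_zero [simp]: "sqnorm k 0 = 0"
  by (simp add: sqnorm_def inner_V_def)

lemma sqnorm_uminus [simp]: "sqnorm k (- x) = sqnorm k x"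
  by (simp add: sqnorm_def inner_V_def)

lemma sqnorm_parallelogram:
  "sqnorm k (b + 2 * z) + sqnorm k b = 2 * sqnorm k (b + z) + 2 * sqnorm k z"
  by (simp add: sqnorm_def inner_V_def sum_distrib_left flip: sum.distrib) (simp add: algebra_simps)

definition bw_min :: "nat \<Rightarrow> nat \<Rightarrow> real" where
  "bw_min j k = 2 ^ (j + k) / 2"

lemma bw_min_Suc [simp]: "bw_min (Suc j) k = 2 * bw_min j k" "bw_min j (Suc k) = 2 * bw_min j k"
  by (simp_all add: bw_min_def)

lemma bw_min_pos [simp]: "0 < bw_min j k"
  by (simp add: bw_min_def)

lemma bw_min_le_sqnorm:
  assumes "x \<in> BW j k" "x \<noteq> 0"
  shows "bw_min j k \<le> sqnorm k x"
  using assms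
proof (induction k arbitrary: j x)
  case 0
  then obtain n :: int where n: "x = (\<lambda>v. if v = [] then 2 ^ (j div 2) * of_int n else 0)"
    by auto
  with 0(2) have "n \<noteq> 0" by auto
  have "(2::real) ^ j \<le> 2 ^ Suc (2 * (j div 2))" by (rule power_increasing) auto
  then have "bw_min j 0 \<le> (2 ^ (j div 2))\<^sup>2"
    by (simp add: bw_min_def power_mult power2_eq_square flip: power_add mult_2)
  also have "\<dots> \<le> (2 ^ (j div 2))\<^sup>2 * (of_int n)\<^sup>2"
  proof -
    have "(1::real) \<le> (of_int n)\<^sup>2"
      using \<open>n \<noteq> 0\<close> by (smt (verit) of_int_1 of_int_power_le_of_int_cancel_iff zero_less_power2)
    then show ?thesis by simp
  qed
  also have "\<dots> = sqnorm 0 x" using n by (simp add: sqnorm_0 power_mult_distrib)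
  finally show ?case .
next
  case (Suc k)
  obtain y z where x: "x = join_halves y z" "y \<in> BW j k" "z \<in> BW j k" "z - y \<in> BW (Suc j) k"
    using Suc.prems(1) by (elim BW_SucE)
  consider "y = 0" | "z = 0" | "y \<noteq> 0" "z \<noteq> 0" by blast
  then show ?case
  proof cases
    case 1
    with x Suc.prems(2) have "z \<in> BW (Suc j) k" "z \<noteq> 0" by auto
    then have "bw_min (Suc j) k \<le> sqnorm k z" by (rule Suc.IH)
    then show ?thesis using x(1) 1 by simp
  next
    case 2
    with x Suc.prems(2) have "- y \<in> BW (Suc j) k" "- y \<noteq> 0" by auto
    then have "bw_min (Suc j) k \<le> sqnorm k (- y)" by (rule Suc.IH)
    then show ?thesis using x(1) 2 by simp
  next
    case 3
    have "bw_min j k \<le> sqnorm k y" using x(2) 3(1) by (rule Suc.IH)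
    moreover have "bw_min j k \<le> sqnorm k z" using x(3) 3(2) by (rule Suc.IH)
    ultimately show ?thesis using x(1) by simp
  qed
qed

definition bw_minimal :: "nat \<Rightarrow> nat \<Rightarrow> vec \<Rightarrow> bool" where
  "bw_minimal j k x \<longleftrightarrow> x \<in> BW j k \<and> sqnorm k x = bw_min j k"

lemma bw_minimal_nonzero: "bw_minimal j k x \<Longrightarrow> x \<noteq> 0"
  by (metis bw_minimal_def bw_min_pos sqnorm_zero less_irrefl)

lemma bw_minimal_uminus [simp]: "bw_minimal j k (- x) \<longleftrightarrow> bw_minimal j k x"
  by (simp add: bw_minimal_def)

lemma bw_minimal_join_halves_right_0 [simp]:
  "bw_minimal j (Suc k) (join_halves y 0) \<longleftrightarrow> bw_minimal (Suc j) k y"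
  using BW_Suc_subset[of y j k] by (auto simp: bw_minimal_def)

lemma bw_minimal_join_halves_left_0 [simp]:
  "bw_minimal j (Suc k) (join_halves 0 z) \<longleftrightarrow> bw_minimal (Suc j) k z"
  using BW_Suc_subset[of z j k] by (auto simp: bw_minimal_def)

lemma bw_minimal_congruent_mod_double:
  assumes "bw_minimal j k b" "q \<in> BW j k" "q - b \<in> BW (Suc (Suc j)) k"
  shows "q = b \<or> q = - b \<or> 3 * bw_min j k \<le> sqnorm k q"
proof -
  obtain z where z: "z \<in> BW j k" "q - b = 2 * z" using assms(3) by (rule BW_halve)
  then have q: "q = b + 2 * z" by (metis add.commute diff_add_cancel)
  consider "z = 0" | "b + z = 0" | "z \<noteq> 0" "b + z \<noteq> 0" by blast
  then show ?thesis
  proof cases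
    case 1
    then show ?thesis using q by simp
  next
    case 2
    then have "z = - b" by (simp add: add_eq_0_iff)
    then show ?thesis using q by simp
  next
    case 3
    have b: "b \<in> BW j k" "sqnorm k b = bw_min j k" using assms(1) by (simp_all add: bw_minimal_def)
    have "bw_min j k \<le> sqnorm k z" using z(1) 3(1) by (rule bw_min_le_sqnorm)
    moreover have "bw_min j k \<le> sqnorm k (b + z)" using BW_add[OF b(1) z(1)] 3(2)
      by (rule bw_min_le_sqnorm)
    ultimately show ?thesis using sqnorm_parallelogram[of k b z] b(2) q by simp
  qed
qed


subsection \<open>Automorphisms acting trivially on the quotients\<close>

definition bw_aut :: "nat \<Rightarrow> (vec \<Rightarrow> vec) \<Rightarrow> bool" where
  "bw_aut k g \<longleftrightarrow> (\<forall>x y. g (x - y) = g x - g y) \<and> (\<forall>x. sqnorm k (g x) = sqnorm k x) \<and>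
     (\<forall>j x. x \<in> BW j k \<longrightarrow> g x - x \<in> BW (Suc j) k)"

lemma bw_autD:
  assumes "bw_aut k g"
  shows "g (x - y) = g x - g y" "sqnorm k (g x) = sqnorm k x"
    "x \<in> BW j k \<Longrightarrow> g x - x \<in> BW (Suc j) k"
  using assms by (auto simp: bw_aut_def)

lemma bw_aut_BW:
  assumes "bw_aut k g" "x \<in> BW j k"
  shows "g x \<in> BW j k"
proof -
  have "g x = (g x - x) + x" by simp
  then show ?thesis using BW_add[OF BW_Suc_subset[OF bw_autD(3)[OF assms]] assms(2)] by simp
qed

lemma bw_aut_zero: "bw_aut k g \<Longrightarrow> g 0 = 0"
  using bw_autD(1)[of k g 0 0] by simp

lemma bw_aut_minimal: "bw_aut k g \<Longrightarrow> bw_minimal j k x \<Longrightarrow> bw_minimal j k (g x)"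
  by (simp add: bw_minimal_def bw_aut_BW bw_autD(2))

lemma bw_aut_id: "bw_aut k id"
  by (simp add: bw_aut_def)

lemma bw_aut_uminus: "bw_aut k uminus"
proof -
  have "- x - x \<in> BW (Suc j) k" if "x \<in> BW j k" for j x
  proof -
    have "- x - x = - (2 * x)" by (simp add: fun_eq_iff)
    moreover have "- (2 * x) \<in> BW (Suc j) k" using double_in_BW_Suc[OF that] by simp
    ultimately show ?thesis by (simp only:)
  qed
  then show ?thesis by (simp add: bw_aut_def)
qed

lemma bw_aut_comp: "bw_aut k f \<Longrightarrow> bw_aut k g \<Longrightarrow> bw_aut k (f \<circ> g)"
proof -
  assume f: "bw_aut k f" and g: "bw_aut k g"
  have "f (g x) - x \<in> BW (Suc j) k" if "x \<in> BW j k" for j x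
  proof -
    have "f (g x) - x = (f (g x) - g x) + (g x - x)" by simp
    then show ?thesis
      using BW_add[OF bw_autD(3)[OF f bw_aut_BW[OF g that]] bw_autD(3)[OF g that]] by simp
  qed
  then show ?thesis using f g by (simp add: bw_aut_def)
qed

definition map_halves :: "(vec \<Rightarrow> vec) \<Rightarrow> vec \<Rightarrow> vec" where
  "map_halves g x = join_halves (g (slice False x)) (g (slice True x))"

definition swap_halves :: "vec \<Rightarrow> vec" where
  "swap_halves x = join_halves (slice True x) (slice False x)"

definition negate_second_half :: "vec \<Rightarrow> vec" where
  "negate_second_half x = join_halves (slice False x) (- slice True x)"

lemma bw_aut_map_halves:
  assumes g: "bw_aut k g"
  shows "bw_aut (Suc k) (map_halves g)"
proof -
  have "map_halves g x - x \<in> BW (Suc j) (Suc k)" if "x \<in> BW j (Suc k)" for j x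
  proof -
    obtain y z where x: "x = join_halves y z" "y \<in> BW j k" "z \<in> BW j k" "z - y \<in> BW (Suc j) k"
      using \<open>x \<in> BW j (Suc k)\<close> by (elim BW_SucE)
    have "map_halves g x - x = join_halves (g y - y) (g z - z)"
      by (simp add: x(1) map_halves_def)
    moreover have "(g z - z) - (g y - y) = g (z - y) - (z - y)"
      using bw_autD(1)[OF g, of z y] by simp
    ultimately show ?thesis
      using bw_autD(3)[OF g] x(2-4) by (simp only: join_halves_in_BW_iff)
  qed
  then show ?thesis using bw_autD(1,2)[OF g] by (simp add: bw_aut_def map_halves_def sqnorm_Suc)
qed

lemma bw_aut_swap_halves: "bw_aut (Suc k) swap_halves"
proof -
  have "swap_halves x - x \<in> BW (Suc j) (Suc k)" if "x \<in> BW j (Suc k)" for j x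
  proof -
    obtain y z where x: "x = join_halves y z" "y \<in> BW j k" "z \<in> BW j k" "z - y \<in> BW (Suc j) k"
      using \<open>x \<in> BW j (Suc k)\<close> by (elim BW_SucE)
    have "swap_halves x - x = join_halves (z - y) (- (z - y))"
      by (simp add: x(1) swap_halves_def)
    moreover have "- (z - y) - (z - y) = - (2 * (z - y))" by (simp add: fun_eq_iff)
    moreover have "2 * (z - y) \<in> BW (Suc (Suc j)) k" using double_in_BW_Suc[OF x(4)] .
    ultimately show ?thesis using x(4) by (simp only: join_halves_in_BW_iff BW_uminus_iff)
  qed
  then show ?thesis by (simp add: bw_aut_def swap_halves_def sqnorm_Suc add.commute)
qed

lemma bw_aut_negate_second_half: "bw_aut (Suc k) negate_second_half"
proof -
  have "negate_second_half x - x \<in> BW (Suc j) (Suc k)" if "x \<in> BW j (Suc k)" for j x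
  proof -
    obtain y z where x: "x = join_halves y z" "y \<in> BW j k" "z \<in> BW j k" "z - y \<in> BW (Suc j) k"
      using \<open>x \<in> BW j (Suc k)\<close> by (elim BW_SucE)
    have "negate_second_half x - x = join_halves 0 (- (2 * z))"
      by (simp add: x(1) negate_second_half_def fun_eq_iff)
    moreover have "2 * z \<in> BW (Suc (Suc j)) k" using x(3) double_in_BW_iff by blast
    ultimately show ?thesis
      using double_in_BW_Suc[OF x(3)]
        by (simp only: join_halves_in_BW_iff BW_uminus_iff diff_zero) simp
  qed
  then show ?thesis by (simp add: bw_aut_def negate_second_half_def sqnorm_Suc)
qed

lemma map_halves_join_halves [simp]: "map_halves g (join_halves y z) = join_halves (g y) (g z)"
  by (simp add: map_halves_def)

lemma swap_halves_join_halves [simp]: "swap_halves (join_halves y z) = join_halves z y"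
  by (simp add: swap_halves_def)

lemma negate_second_half_join_halves [simp]:
  "negate_second_half (join_halves y z) = join_halves y (- z)"
  by (simp add: negate_second_half_def)

lemma bw_minimal_not_in_BW_Suc: "bw_minimal j k x \<Longrightarrow> x \<notin> BW (Suc j) k"
  using bw_min_le_sqnorm[of x "Suc j" k] bw_minimal_nonzero[of j k x] bw_min_pos[of j k]
  by (auto simp: bw_minimal_def)

lemma bw_minimal_halves:
  assumes "bw_minimal j (Suc k) (join_halves y z)" "y \<noteq> 0" "z \<noteq> 0"
  shows "bw_minimal j k y" "bw_minimal j k z"
proof -
  have "y \<in> BW j k" "z \<in> BW j k" and sum: "sqnorm k y + sqnorm k z = 2 * bw_min j k"
    using assms(1) by (simp_all add: bw_minimal_def)
  moreover have "bw_min j k \<le> sqnorm k y" "bw_min j k \<le> sqnorm k z"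
    using calculation(1,2) assms(2,3) by (simp_all add: bw_min_le_sqnorm)
  ultimately show "bw_minimal j k y" "bw_minimal j k z" by (simp_all add: bw_minimal_def)
qed


subsection \<open>Minimal vectors in a coset are conjugate\<close>

definition bw_conjugate :: "nat \<Rightarrow> vec \<Rightarrow> vec \<Rightarrow> bool" where
  "bw_conjugate k a p \<longleftrightarrow> (\<exists>g. bw_aut k g \<and> p = g a)"

lemma bw_conjugateI: "bw_aut k g \<Longrightarrow> bw_conjugate k a (g a)"
  by (auto simp: bw_conjugate_def)

lemma bw_conjugate_trans: "bw_conjugate k a b \<Longrightarrow> bw_conjugate k b c \<Longrightarrow> bw_conjugate k a c"
  by (auto simp: bw_conjugate_def intro: bw_aut_comp[unfolded comp_def])

lemma bw_conjugate_join_halves_right_0: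
  "bw_conjugate k y y' \<Longrightarrow> bw_conjugate (Suc k) (join_halves y 0) (join_halves y' 0)"
  unfolding bw_conjugate_def using bw_aut_map_halves bw_aut_zero map_halves_join_halves by metis

lemma bw_minimal_conjugate_0:
  assumes "bw_minimal j 0 a" "bw_minimal j 0 p"
  shows "bw_conjugate 0 a p"
proof -
  have zero: "a v = 0" "p v = 0" if "v \<noteq> []" for v
    using assms that by (auto simp: bw_minimal_def)
  have "(p [])\<^sup>2 = (a [])\<^sup>2" using assms by (simp add: bw_minimal_def sqnorm_0)
  then consider "p [] = a []" | "p [] = - a []" by (auto simp: power2_eq_iff)
  then show ?thesis
  proof cases
    case 1
    have "p = id a"
    proof
      fix v show "p v = id a v" using 1 zero by (cases "v = []") auto
    qed
    then show ?thesis using bw_conjugateI[OF bw_aut_id] by simp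
  next
    case 2
    have "p = - a"
    proof
      fix v show "p v = (- a) v" using 2 zero by (cases "v = []") auto
    qed
    then show ?thesis using bw_conjugateI[OF bw_aut_uminus] by simp
  qed
qed

definition minimal_vectors_conjugate :: "nat \<Rightarrow> bool" where
  "minimal_vectors_conjugate k \<longleftrightarrow> (\<forall>j a p. bw_minimal j k a \<longrightarrow> bw_minimal j k p \<longrightarrow>
      p - a \<in> BW (Suc j) k \<longrightarrow> bw_conjugate k a p)"

lemma bw_minimal_conjugate_Suc_second_half_zero:
  assumes IH: "minimal_vectors_conjugate k"
    and y: "bw_minimal (Suc j) k y" and p: "bw_minimal j (Suc k) p"
    and diff: "p - join_halves y 0 \<in> BW (Suc j) (Suc k)"
  shows "bw_conjugate (Suc k) (join_halves y 0) p"
proof -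
  obtain u v where uv: "p = join_halves u v" using p unfolding bw_minimal_def
    by (blast elim: BW_SucE)
  have d: "u - y \<in> BW (Suc j) k" "v \<in> BW (Suc j) k" "v - (u - y) \<in> BW (Suc (Suc j)) k"
    using diff by (simp_all add: uv)
  have u: "u \<in> BW (Suc j) k" using BW_add[OF d(1), of y] y by (simp add: bw_minimal_def)
  have norm: "sqnorm k u + sqnorm k v = bw_min (Suc j) k"
    using p by (simp add: uv bw_minimal_def)
  have "u = 0 \<or> v = 0"
  proof (rule ccontr)
    assume "\<not> ?thesis"
    then have "bw_min (Suc j) k \<le> sqnorm k u" "bw_min (Suc j) k \<le> sqnorm k v"
      using bw_min_le_sqnorm[OF u] bw_min_le_sqnorm[OF d(2)] by auto
    then show False using norm bw_min_pos[of "Suc j" k] by linarith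
  qed
  then show ?thesis
  proof
    assume "v = 0"
    then have "bw_minimal (Suc j) k u" "u - y \<in> BW (Suc (Suc j)) k"
      using u norm d(3) by (simp_all add: bw_minimal_def BW_diff_commute[of y u])
    then show ?thesis
      using IH y uv \<open>v = 0\<close> bw_conjugate_join_halves_right_0 by (simp add: minimal_vectors_conjugate_def)
  next
    assume "u = 0"
    then have "bw_minimal (Suc j) k v" "v - (- y) \<in> BW (Suc (Suc j)) k"
      using d norm by (simp_all add: bw_minimal_def)
    then have "bw_conjugate k (- y) v" using IH y by (simp add: minimal_vectors_conjugate_def)
    then have "bw_conjugate (Suc k) (join_halves 0 (- y)) p"
      unfolding uv \<open>u = 0\<close> bw_conjugate_def using bw_aut_map_halves bw_aut_zero
      by (metis map_halves_join_halves)
    moreover have "bw_conjugate (Suc k) (join_halves y 0) (join_halves 0 (- y))"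
      using bw_conjugateI[OF bw_aut_comp[OF bw_aut_negate_second_half bw_aut_swap_halves],
          where a = "join_halves y 0"]
      by simp
    ultimately show ?thesis using bw_conjugate_trans by blast
  qed
qed

lemma swap_halves_swap_halves: "x [] = 0 \<Longrightarrow> swap_halves (swap_halves x) = x"
  by (simp add: swap_halves_def join_halves_slices)

lemma bw_minimal_conjugate_Suc_first_half_zero:
  assumes IH: "minimal_vectors_conjugate k"
    and z: "bw_minimal (Suc j) k z" and p: "bw_minimal j (Suc k) p"
    and diff: "p - join_halves 0 z \<in> BW (Suc j) (Suc k)"
  shows "bw_conjugate (Suc k) (join_halves 0 z) p"
proof -
  let ?s = swap_halves
  have s: "bw_aut (Suc k) ?s" by (rule bw_aut_swap_halves)
  have "?s p - join_halves z 0 = ?s (p - join_halves 0 z)" using bw_autD(1)[OF s] by simp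
  then have "bw_conjugate (Suc k) (join_halves z 0) (?s p)"
    using bw_minimal_conjugate_Suc_second_half_zero[OF IH z bw_aut_minimal[OF s p]]
      bw_aut_BW[OF s diff]
    by simp
  moreover have "?s (?s p) = p" using p by (simp add: bw_minimal_def swap_halves_swap_halves)
  ultimately show ?thesis
    using bw_conjugateI[OF s, of "join_halves 0 z"] bw_conjugateI[OF s, of "?s p"]
    by (metis bw_conjugate_trans swap_halves_join_halves)
qed

lemma bw_minimal_conjugate_Suc_halves_nonzero:
  assumes IH: "minimal_vectors_conjugate k"
    and a: "bw_minimal j (Suc k) (join_halves y z)" "y \<noteq> 0" "z \<noteq> 0"
    and p: "bw_minimal j (Suc k) p"
    and diff: "p - join_halves y z \<in> BW (Suc j) (Suc k)"
  shows "bw_conjugate (Suc k) (join_halves y z) p"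
proof -
  have y: "bw_minimal j k y" and z: "bw_minimal j k z" using bw_minimal_halves[OF a] by blast+
  have "z - y \<in> BW (Suc j) k" using a(1) by (simp add: bw_minimal_def)
  obtain u v where uv: "p = join_halves u v" using p unfolding bw_minimal_def
    by (blast elim: BW_SucE)
  have d: "u - y \<in> BW (Suc j) k" "v - z \<in> BW (Suc j) k" "(v - z) - (u - y) \<in> BW (Suc (Suc j)) k"
    using diff by (simp_all add: uv)
  have "u \<noteq> 0" "v \<noteq> 0"
    using d(1,2) bw_minimal_not_in_BW_Suc[OF y] bw_minimal_not_in_BW_Suc[OF z] by auto
  then have u: "bw_minimal j k u" and v: "bw_minimal j k v"
    using bw_minimal_halves p uv by blast+
  have "bw_conjugate k y u" using IH y u d(1) by (simp add: minimal_vectors_conjugate_def)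
  then obtain g where g: "bw_aut k g" "u = g y" by (auto simp: bw_conjugate_def)
  \<comment> \<open>\<open>v\<close> is congruent to \<open>g z\<close> modulo \<open>BW (j + 2) k = 2 BW j k\<close>, so \<open>v = \<plusminus> g z\<close>.\<close>
  have "v - g z = ((v - z) - (u - y)) - (g (z - y) - (z - y))"
    using g bw_autD(1)[OF g(1), of z y] by (simp add: algebra_simps)
  moreover have "((v - z) - (u - y)) - (g (z - y) - (z - y)) \<in> BW (Suc (Suc j)) k"
    using BW_diff[OF d(3) bw_autD(3)[OF g(1) \<open>z - y \<in> BW (Suc j) k\<close>]] .
  ultimately have "v - g z \<in> BW (Suc (Suc j)) k" by (simp only:)
  moreover have "v \<in> BW j k" using v by (simp add: bw_minimal_def)
  ultimately have "v = g z \<or> v = - g z \<or> 3 * bw_min j k \<le> sqnorm k v"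
    using bw_minimal_congruent_mod_double[OF bw_aut_minimal[OF g(1) z]] by blast
  moreover have "\<not> 3 * bw_min j k \<le> sqnorm k v" using v bw_min_pos[of j k]
    by (simp add: bw_minimal_def)
  ultimately have "p = map_halves g (join_halves y z) \<or>
      p = negate_second_half (map_halves g (join_halves y z))"
    using uv g(2) by auto
  then show ?thesis
    using bw_conjugateI bw_aut_map_halves[OF g(1)]
      bw_aut_comp[OF bw_aut_negate_second_half bw_aut_map_halves[OF g(1)]]
    by (metis comp_apply)
qed

lemma minimal_vectors_conjugate_holds: "minimal_vectors_conjugate k"
proof (induction k)
  case 0
  then show ?case using bw_minimal_conjugate_0 by (auto simp: minimal_vectors_conjugate_def)
next
  case (Suc k)
  have "bw_conjugate (Suc k) a p"
    if a: "bw_minimal j (Suc k) a" and p: "bw_minimal j (Suc k) p"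
      and diff: "p - a \<in> BW (Suc j) (Suc k)" for j a p
  proof -
    obtain y z where yz: "a = join_halves y z" using a unfolding bw_minimal_def
      by (blast elim: BW_SucE)
    consider "z = 0" | "y = 0" | "y \<noteq> 0" "z \<noteq> 0" by blast
    then show ?thesis
    proof cases
      case 1
      then show ?thesis
        using bw_minimal_conjugate_Suc_second_half_zero[OF Suc.IH _ p] a diff yz by simp
    next
      case 2
      then show ?thesis
        using bw_minimal_conjugate_Suc_first_half_zero[OF Suc.IH _ p] a diff yz by simp
    next
      case 3
      then show ?thesis
        using bw_minimal_conjugate_Suc_halves_nonzero[OF Suc.IH _ _ _ p] a diff yz by simp
    qed
  qed
  then show ?case by (simp add: minimal_vectors_conjugate_def)
qed

lemma bw_minimal_conjugate:
  "bw_minimal j k a \<Longrightarrow> bw_minimal j k p \<Longrightarrow> p - a \<in> BW (Suc j) k \<Longrightarrow> bw_conjugate k a p"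
  using minimal_vectors_conjugate_holds[of k] by (simp add: minimal_vectors_conjugate_def)

subsection \<open>The norm gap in a coset\<close>

lemma sqnorm_minimal_coset_0:
  assumes l: "bw_minimal j 0 l" and d: "d \<in> BW (Suc j) 0"
  shows "sqnorm 0 (l + d) = bw_min j 0 \<or> 2 * bw_min j 0 \<le> sqnorm 0 (l + d)"
proof -
  define c :: real where "c = 2 ^ (j div 2)"
  have c2: "c\<^sup>2 = 2 ^ (2 * (j div 2))" by (simp add: c_def flip: power_mult)
  obtain n :: int where n: "l [] = c * of_int n" using l by (auto simp: bw_minimal_def c_def)
  obtain n' :: int where n': "d [] = 2 ^ (Suc j div 2) * of_int n'" using d by auto
  have norm: "c\<^sup>2 * (of_int n)\<^sup>2 = bw_min j 0"
    using l n by (simp add: bw_minimal_def sqnorm_0 power_mult_distrib)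
  have "odd j"
  proof
    assume "even j"
    then have "bw_min j 0 = c\<^sup>2 / 2" by (simp add: bw_min_def c2)
    then have "c\<^sup>2 * (2 * (of_int n)\<^sup>2 - 1) = 0" using norm by (simp add: algebra_simps)
    then have "of_int (2 * n\<^sup>2) = (1::real)" by (simp add: c_def)
    then have "2 * n\<^sup>2 = 1" using of_int_eq_1_iff by blast
    then show False by presburger
  qed
  then obtain i where i: "j = 2 * i + 1" by (rule oddE)
  then have j: "Suc j div 2 = Suc (j div 2)" "bw_min j 0 = c\<^sup>2" by (simp_all add: bw_min_def c2)
  define t where "t = n + 2 * n'"
  have "of_int (n\<^sup>2) = (of_int 1 :: real)" using norm j(2) by (simp add: c_def)
  then have "odd (n\<^sup>2)" by (simp only: of_int_eq_iff) simp
  then have "odd n" by simp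
  then have "t \<noteq> 0" unfolding t_def by presburger
  have "(l + d) [] = c * of_int t" using n n' j(1) by (simp add: t_def c_def algebra_simps)
  then have sum: "sqnorm 0 (l + d) = bw_min j 0 * of_int (t\<^sup>2)"
    using j(2) by (simp add: sqnorm_0 power_mult_distrib)
  have "t\<^sup>2 = 1 \<or> 2 \<le> t\<^sup>2" using \<open>t \<noteq> 0\<close> by (smt (verit) zero_less_power2)
  then have "of_int (t\<^sup>2) = (1::real) \<or> (2::real) \<le> of_int (t\<^sup>2)"
    by (metis of_int_1 of_int_le_iff of_int_numeral)
  then show ?thesis using sum bw_min_pos[of j 0] by (auto simp del: of_int_power)
qed

lemma sqnorm_translate_minimal:
  assumes a: "bw_minimal j k a" and a': "bw_minimal j k a'" and aa': "a' - a \<in> BW (Suc j) k"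
    and e: "e \<in> BW (Suc j) k" and ee': "e' - e \<in> BW (Suc (Suc j)) k"
    and ae: "sqnorm k (a + e) = bw_min j k"
  shows "sqnorm k (a' + e') = bw_min j k \<or> 3 * bw_min j k \<le> sqnorm k (a' + e')"
proof -
  have "bw_minimal j k (a + e)"
    using a BW_add[OF _ BW_Suc_subset[OF e]] ae by (simp add: bw_minimal_def)
  then have "bw_conjugate k a (a + e)" using bw_minimal_conjugate[OF a] e by simp
  then obtain g where g: "bw_aut k g" "a + e = g a" by (auto simp: bw_conjugate_def)
  have "g a' = g (a' - a) + (a + e)" using g(2) bw_autD(1)[OF g(1), of a' a] by simp
  then have "a' + e' - g a' = (e' - e) - (g (a' - a) - (a' - a))" by (simp add: algebra_simps)
  moreover have "(e' - e) - (g (a' - a) - (a' - a)) \<in> BW (Suc (Suc j)) k"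
    using BW_diff[OF ee' bw_autD(3)[OF g(1) aa']] .
  ultimately have diff: "a' + e' - g a' \<in> BW (Suc (Suc j)) k" by (simp only:)
  have "e' = (e' - e) + e" by simp
  then have "e' \<in> BW j k"
    using BW_add[OF BW_Suc_subset[OF BW_Suc_subset[OF ee']] BW_Suc_subset[OF e]] by simp
  then have "a' + e' \<in> BW j k" using a' BW_add by (simp add: bw_minimal_def)
  from bw_minimal_congruent_mod_double[OF bw_aut_minimal[OF g(1) a'] this diff]
  show ?thesis using bw_aut_minimal[OF g(1) a'] by (auto simp: bw_minimal_def)
qed

definition coset_norm_gap :: "nat \<Rightarrow> bool" where
  "coset_norm_gap k \<longleftrightarrow> (\<forall>j l d. bw_minimal j k l \<longrightarrow> d \<in> BW (Suc j) k \<longrightarrow>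
      sqnorm k (l + d) = bw_min j k \<or> 2 * bw_min j k \<le> sqnorm k (l + d))"

lemma sqnorm_minimal_coset_Suc_second_half_zero:
  assumes IH: "coset_norm_gap k"
    and y: "bw_minimal (Suc j) k y" and d: "d \<in> BW (Suc j) (Suc k)"
  shows "sqnorm (Suc k) (join_halves y 0 + d) = bw_min j (Suc k) \<or>
    2 * bw_min j (Suc k) \<le> sqnorm (Suc k) (join_halves y 0 + d)"
proof -
  obtain e e' where e: "d = join_halves e e'" "e \<in> BW (Suc j) k" "e' \<in> BW (Suc j) k"
      "e' - e \<in> BW (Suc (Suc j)) k"
    using d by (elim BW_SucE)
  have norm: "sqnorm (Suc k) (join_halves y 0 + d) = sqnorm k (y + e) + sqnorm k e'"
    by (simp add: e(1))
  consider "e' = 0" | "y + e = 0" | "e' \<noteq> 0" "y + e \<noteq> 0" by blast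
  then show ?thesis
  proof cases
    case 1
    then have "e \<in> BW (Suc (Suc j)) k" using e(4) by simp
    from IH[unfolded coset_norm_gap_def, rule_format, OF y this] show ?thesis using norm 1 by simp
  next
    case 2
    then have e': "- y + (e' - e) = e'" by (simp add: add_eq_0_iff algebra_simps)
    have "bw_minimal (Suc j) k (- y)" using y by simp
    from IH[unfolded coset_norm_gap_def, rule_format, OF this e(4), unfolded e'] show ?thesis
      using norm 2 by simp
  next
    case 3
    have "y + e \<in> BW (Suc j) k" using BW_add[OF _ e(2)] y by (simp add: bw_minimal_def)
    then show ?thesis
      using norm 3 bw_min_le_sqnorm[OF e(3)] bw_min_le_sqnorm[of "y + e" "Suc j" k] by simp
  qed
qed

lemma sqnorm_minimal_coset_Suc_first_half_zero:
  assumes IH: "coset_norm_gap k"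
    and z: "bw_minimal (Suc j) k z" and d: "d \<in> BW (Suc j) (Suc k)"
  shows "sqnorm (Suc k) (join_halves 0 z + d) = bw_min j (Suc k) \<or>
    2 * bw_min j (Suc k) \<le> sqnorm (Suc k) (join_halves 0 z + d)"
proof -
  let ?s = swap_halves
  have s: "bw_aut (Suc k) ?s" by (rule bw_aut_swap_halves)
  have "?s (join_halves 0 z + d) = join_halves z 0 + ?s d" by (simp add: swap_halves_def)
  then show ?thesis
    using sqnorm_minimal_coset_Suc_second_half_zero[OF IH z bw_aut_BW[OF s d]]
      bw_autD(2)[OF s, of "join_halves 0 z + d"]
    by simp
qed

lemma sqnorm_minimal_coset_Suc_halves_nonzero:
  assumes IH: "coset_norm_gap k"
    and l: "bw_minimal j (Suc k) (join_halves y z)" "y \<noteq> 0" "z \<noteq> 0"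
    and d: "d \<in> BW (Suc j) (Suc k)"
  shows "sqnorm (Suc k) (join_halves y z + d) = bw_min j (Suc k) \<or>
    2 * bw_min j (Suc k) \<le> sqnorm (Suc k) (join_halves y z + d)"
proof -
  have y: "bw_minimal j k y" and z: "bw_minimal j k z" using bw_minimal_halves[OF l] by blast+
  have yz: "z - y \<in> BW (Suc j) k" "y - z \<in> BW (Suc j) k"
    using l(1) BW_diff_commute by (simp_all add: bw_minimal_def)
  obtain e e' where e: "d = join_halves e e'" "e \<in> BW (Suc j) k" "e' \<in> BW (Suc j) k"
      "e' - e \<in> BW (Suc (Suc j)) k" "e - e' \<in> BW (Suc (Suc j)) k"
    using d BW_diff_commute by (elim BW_SucE) blast
  define \<mu> where "\<mu> = bw_min j k"
  have "\<mu> > 0" by (simp add: \<mu>_def)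
  have norm: "sqnorm (Suc k) (join_halves y z + d) = sqnorm k (y + e) + sqnorm k (z + e')"
    by (simp add: e(1))
  have p: "sqnorm k (y + e) = \<mu> \<or> 2 * \<mu> \<le> sqnorm k (y + e)"
    using IH y e(2) by (simp add: coset_norm_gap_def \<mu>_def)
  have q: "sqnorm k (z + e') = \<mu> \<or> 2 * \<mu> \<le> sqnorm k (z + e')"
    using IH z e(3) by (simp add: coset_norm_gap_def \<mu>_def)
  have "sqnorm k (z + e') = \<mu> \<or> 3 * \<mu> \<le> sqnorm k (z + e')" if "sqnorm k (y + e) = \<mu>"
    using sqnorm_translate_minimal[OF y z yz(1) e(2) e(4)] that by (simp add: \<mu>_def)
  moreover have "sqnorm k (y + e) = \<mu> \<or> 3 * \<mu> \<le> sqnorm k (y + e)" if "sqnorm k (z + e') = \<mu>"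
    using sqnorm_translate_minimal[OF z y yz(2) e(3) e(5)] that by (simp add: \<mu>_def)
  ultimately show ?thesis using norm p q \<open>\<mu> > 0\<close> by (auto simp: \<mu>_def)
qed

lemma coset_norm_gap_holds: "coset_norm_gap k"
proof (induction k)
  case 0
  then show ?case using sqnorm_minimal_coset_0 by (auto simp: coset_norm_gap_def)
next
  case (Suc k)
  have "sqnorm (Suc k) (l + d) = bw_min j (Suc k) \<or> 2 * bw_min j (Suc k) \<le> sqnorm (Suc k) (l + d)"
    if l: "bw_minimal j (Suc k) l" and d: "d \<in> BW (Suc j) (Suc k)" for j l d
  proof -
    obtain y z where yz: "l = join_halves y z" using l unfolding bw_minimal_def
      by (blast elim: BW_SucE)
    consider "z = 0" | "y = 0" | "y \<noteq> 0" "z \<noteq> 0" by blast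
    then show ?thesis
    proof cases
      case 1
      then show ?thesis using sqnorm_minimal_coset_Suc_second_half_zero[OF Suc.IH _ d] l yz by simp
    next
      case 2
      then show ?thesis using sqnorm_minimal_coset_Suc_first_half_zero[OF Suc.IH _ d] l yz by simp
    next
      case 3
      then show ?thesis using sqnorm_minimal_coset_Suc_halves_nonzero[OF Suc.IH _ _ _ d] l yz
        by simp
    qed
  qed
  then show ?case by (simp add: coset_norm_gap_def)
qed

lemma sqnorm_minimal_coset:
  "bw_minimal j k l \<Longrightarrow> d \<in> BW (Suc j) k \<Longrightarrow>
    sqnorm k (l + d) = bw_min j k \<or> 2 * bw_min j k \<le> sqnorm k (l + d)"
  using coset_norm_gap_holds[of k] by (simp add: coset_norm_gap_def)

subsection \<open>Linear and affine subspaces of \<open>F\<^sub>2\<^sup>m\<close>\<close>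

lemma vadd_Cons [simp]: "vadd (b # u) (c # w) = (b \<noteq> c) # vadd u w"
  by (simp add: vadd_def)

lemma vadd_Nil [simp]: "vadd [] w = []" "vadd u [] = []"
  by (simp_all add: vadd_def)

lemma length_vadd [simp]: "length (vadd u w) = min (length u) (length w)"
  by (simp add: vadd_def)

lemma vadd_Vsp: "u \<in> Vsp m \<Longrightarrow> w \<in> Vsp m \<Longrightarrow> vadd u w \<in> Vsp m"
  by (simp add: Vsp_def)

lemma vadd_vadd_cancel: "length u = length w \<Longrightarrow> vadd u (vadd u w) = w"
  by (induction u w rule: list_induct2) auto

lemma vadd_commute: "vadd u w = vadd w u"
proof (induction u arbitrary: w)
  case (Cons b u)
  then show ?case by (cases w) auto
qed simp

lemma vadd_assoc: "vadd (vadd u w) z = vadd u (vadd w z)"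
proof (induction u arbitrary: w z)
  case (Cons b u)
  then show ?case by (cases w; cases z) auto
qed simp

lemma inj_on_vadd: "u \<in> Vsp m \<Longrightarrow> inj_on (vadd u) (Vsp m)"
proof (rule inj_onI)
  fix x y assume V: "u \<in> Vsp m" "x \<in> Vsp m" "y \<in> Vsp m" and eq: "vadd u x = vadd u y"
  have "x = vadd u (vadd u x)" using V by (simp add: Vsp_def vadd_vadd_cancel)
  also have "\<dots> = y" using V by (simp add: eq Vsp_def vadd_vadd_cancel)
  finally show "x = y" .
qed

lemma lin_subspace_card_le:
  assumes "lin_subspace m W" "card W = 2 ^ r"
  shows "r \<le> m"
proof -
  have "card W \<le> card (Vsp m)"
    using assms(1) by (intro card_mono) (auto simp: lin_subspace_def)
  then show ?thesis using assms(2) by (simp add: card_Vsp)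
qed

lemma lin_subspace_coset_self:
  assumes "lin_subspace m W" "s \<in> W"
  shows "vadd s ` W = W"
proof
  show "vadd s ` W \<subseteq> W" using assms by (auto simp: lin_subspace_def)
  show "W \<subseteq> vadd s ` W"
  proof
    fix u assume "u \<in> W"
    then have "vadd s u \<in> W" "u = vadd s (vadd s u)"
      using assms by (auto simp: lin_subspace_def Vsp_def vadd_vadd_cancel subset_iff)
    then show "u \<in> vadd s ` W" by blast
  qed
qed

lemma lin_subspace_coset_disjoint:
  assumes "lin_subspace m W" "s \<in> Vsp m" "s \<notin> W"
  shows "W \<inter> vadd s ` W = {}"
proof (rule ccontr)
  assume "W \<inter> vadd s ` W \<noteq> {}"
  then obtain w where w: "w \<in> W" "vadd s w \<in> W" by auto
  then have "vadd (vadd s w) w \<in> W" using assms(1) by (auto simp: lin_subspace_def)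
  moreover have "length w = length s" using w(1) assms(1,2) by (auto simp: lin_subspace_def Vsp_def)
  then have "vadd (vadd s w) w = s"
    by (simp add: vadd_commute[of _ w] vadd_commute[of s] vadd_vadd_cancel)
  ultimately show False using assms(3) by simp
qed

definition fiber :: "bool \<Rightarrow> bool list set \<Rightarrow> bool list set" where
  "fiber b W = {u. b # u \<in> W}"

lemma fiber_subset_Vsp: "W \<subseteq> Vsp (Suc m) \<Longrightarrow> fiber b W \<subseteq> Vsp m"
  by (auto simp: fiber_def Vsp_def)

lemma card_fibers:
  assumes "W \<subseteq> Vsp (Suc m)"
  shows "card W = card (fiber False W) + card (fiber True W)"
proof -
  have W: "W = Cons False ` fiber False W \<union> Cons True ` fiber True W"
  proof
    show "W \<subseteq> Cons False ` fiber False W \<union> Cons True ` fiber True W"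
    proof
      fix x assume "x \<in> W"
      moreover obtain b u where "x = b # u" using \<open>x \<in> W\<close> assms by (cases x) (auto simp: Vsp_def)
      ultimately show "x \<in> Cons False ` fiber False W \<union> Cons True ` fiber True W"
        by (cases b) (auto simp: fiber_def)
    qed
  qed (auto simp: fiber_def)
  have "finite (fiber b W)" for b
    using fiber_subset_Vsp[OF assms] finite_Vsp by (rule finite_subset)
  then have "card (Cons False ` fiber False W \<union> Cons True ` fiber True W) =
      card (fiber False W) + card (fiber True W)"
    by (subst card_Un_disjoint) (auto simp: card_image)
  with W show ?thesis by (metis (no_types))
qed

lemma lin_subspace_fiber_False:
  assumes "lin_subspace (Suc m) W"
  shows "lin_subspace m (fiber False W)"
  unfolding lin_subspace_def
proof (intro conjI ballI)
  show "fiber False W \<subseteq> Vsp m" using assms by (simp add: lin_subspace_def fiber_subset_Vsp)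
  show "replicate m False \<in> fiber False W" using assms by (simp add: lin_subspace_def fiber_def)
next
  fix u w assume "u \<in> fiber False W" "w \<in> fiber False W"
  then have "vadd (False # u) (False # w) \<in> W"
    using assms unfolding lin_subspace_def fiber_def by blast
  then show "vadd u w \<in> fiber False W" by (simp add: fiber_def)
qed

lemma fiber_True_coset:
  assumes W: "lin_subspace (Suc m) W" and s: "s \<in> fiber True W"
  shows "fiber True W = vadd s ` fiber False W"
proof
  have sV: "length s = m" using W s by (auto simp: lin_subspace_def fiber_def Vsp_def)
  show "fiber True W \<subseteq> vadd s ` fiber False W"
  proof
    fix u assume u: "u \<in> fiber True W"
    then have "vadd (True # s) (True # u) \<in> W"
      using W s unfolding lin_subspace_def fiber_def by blast
    moreover have "length u = m" using W u by (auto simp: lin_subspace_def fiber_def Vsp_def)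
    ultimately have "vadd s u \<in> fiber False W" "u = vadd s (vadd s u)"
      using sV by (simp_all add: fiber_def vadd_vadd_cancel)
    then show "u \<in> vadd s ` fiber False W" by blast
  qed
  show "vadd s ` fiber False W \<subseteq> fiber True W"
  proof
    fix u assume "u \<in> vadd s ` fiber False W"
    then obtain w where "False # w \<in> W" "u = vadd s w" by (auto simp: fiber_def)
    moreover have "vadd (True # s) (False # w) \<in> W"
      using W s calculation(1) unfolding lin_subspace_def fiber_def by blast
    ultimately show "u \<in> fiber True W" by (simp add: fiber_def)
  qed
qed

lemma lin_subspace_fibers_Un:
  assumes W: "lin_subspace (Suc m) W"
  shows "lin_subspace m (fiber False W \<union> fiber True W)"
  unfolding lin_subspace_def
proof (intro conjI ballI)
  show "fiber False W \<union> fiber True W \<subseteq> Vsp m"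
    using W fiber_subset_Vsp by (auto simp: lin_subspace_def)
  show "replicate m False \<in> fiber False W \<union> fiber True W"
    using W by (simp add: lin_subspace_def fiber_def)
next
  fix u w assume "u \<in> fiber False W \<union> fiber True W" "w \<in> fiber False W \<union> fiber True W"
  then obtain b c where "b # u \<in> W" "c # w \<in> W" by (auto simp: fiber_def)
  then have "vadd (b # u) (c # w) \<in> W" using W unfolding lin_subspace_def by blast
  then show "vadd u w \<in> fiber False W \<union> fiber True W" by (cases "b = c") (auto simp: fiber_def)
qed

lemma fiber_translate:
  assumes "W \<subseteq> Vsp (Suc m)"
  shows "fiber b (vadd (a0 # a) ` W) = vadd a ` fiber (a0 \<noteq> b) W"
proof
  show "fiber b (vadd (a0 # a) ` W) \<subseteq> vadd a ` fiber (a0 \<noteq> b) W"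
  proof
    fix w assume "w \<in> fiber b (vadd (a0 # a) ` W)"
    then obtain x where x: "x \<in> W" "b # w = vadd (a0 # a) x" by (auto simp: fiber_def)
    moreover obtain c u where "x = c # u" using x(1) assms by (cases x) (auto simp: Vsp_def)
    ultimately show "w \<in> vadd a ` fiber (a0 \<noteq> b) W" by (auto simp: fiber_def)
  qed
  show "vadd a ` fiber (a0 \<noteq> b) W \<subseteq> fiber b (vadd (a0 # a) ` W)"
  proof
    fix w assume "w \<in> vadd a ` fiber (a0 \<noteq> b) W"
    then obtain u where u: "(a0 \<noteq> b) # u \<in> W" "w = vadd a u" by (auto simp: fiber_def)
    then have "b # w = vadd (a0 # a) ((a0 \<noteq> b) # u)" by auto
    then have "b # w \<in> vadd (a0 # a) ` W" using u(1) by (rule image_eqI)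
    then show "w \<in> fiber b (vadd (a0 # a) ` W)" by (simp add: fiber_def)
  qed
qed

lemma slice_scaled_xvec: "slice b (\<lambda>v. c * xvec U v) = (\<lambda>w. c * xvec (fiber b U) w)"
  by (simp add: fun_eq_iff xvec_def fiber_def)

lemma finite_fiber: "W \<subseteq> Vsp (Suc m) \<Longrightarrow> finite (fiber b W)"
  using fiber_subset_Vsp finite_Vsp by (rule finite_subset)

lemma card_fibers_Un:
  assumes "W \<subseteq> Vsp (Suc m)" "fiber False W \<inter> fiber True W = {}"
  shows "card (fiber False W \<union> fiber True W) = card W"
  using assms card_fibers[OF assms(1)] by (simp add: card_Un_disjoint finite_fiber)

lemma lin_subspace_fiber_True_cases:
  assumes W: "lin_subspace (Suc m) W" and card: "card W = 2 ^ r"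
  obtains (empty) "fiber True W = {}" "card (fiber False W) = 2 ^ r"
    | (coset) s r' where "s \<in> Vsp m" "fiber True W = vadd s ` fiber False W"
      "r = Suc r'" "card (fiber False W) = 2 ^ r'"
proof (cases "fiber True W = {}")
  case True
  then show ?thesis using empty card card_fibers[of W m] W by (simp add: lin_subspace_def)
next
  case False
  then obtain s where s: "s \<in> fiber True W" by blast
  then have W1: "fiber True W = vadd s ` fiber False W" by (rule fiber_True_coset[OF W])
  have sV: "s \<in> Vsp m" using s W fiber_subset_Vsp by (auto simp: lin_subspace_def)
  have "fiber False W \<subseteq> Vsp m" using W fiber_subset_Vsp by (simp add: lin_subspace_def)
  then have "card (fiber True W) = card (fiber False W)"
    unfolding W1 by (intro card_image inj_on_subset[OF inj_on_vadd[OF sV]])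
  then have "2 ^ r = 2 * card (fiber False W)" using card card_fibers[of W m] W
    by (simp add: lin_subspace_def)
  moreover from this have "r \<noteq> 0" by (metis dvd_triv_left odd_one power_0)
  ultimately show ?thesis using coset[OF sV W1] by (cases r) auto
qed

lemma scaled_xvec_translate_Un:
  assumes "a \<in> Vsp m" "A \<subseteq> Vsp m" "B \<subseteq> Vsp m" "A \<inter> B = {}"
  shows "(\<lambda>v. c * xvec (vadd a ` (A \<union> B)) v) =
    (\<lambda>v. c * xvec (vadd a ` A) v) + (\<lambda>v. c * xvec (vadd a ` B) v)"
proof -
  have "vadd a ` A \<inter> vadd a ` B = {}"
    using assms inj_on_image_Int[OF inj_on_vadd[OF assms(1)] assms(2,3)] by simp
  then show ?thesis by (auto simp: fun_eq_iff xvec_def image_Un)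
qed

lemma translated_fibers_in_BW:
  fixes j :: nat
  assumes IH: "\<forall>j r a W. lin_subspace m W \<longrightarrow> a \<in> Vsp m \<longrightarrow> card W = 2 ^ r \<longrightarrow>
      (\<lambda>v. 2 ^ ((m - r + j) div 2) * xvec (vadd a ` W) v) \<in> BW j m"
    and W: "lin_subspace (Suc m) W" and a: "a \<in> Vsp m" and card: "card W = 2 ^ r"
  defines "Y \<equiv> \<lambda>b. (\<lambda>v. 2 ^ ((Suc m - r + j) div 2) * xvec (vadd a ` fiber b W) v)"
  shows "Y False \<in> BW j m \<and> Y True \<in> BW j m \<and> Y True - Y False \<in> BW (Suc j) m"
proof -
  define W0 where "W0 = fiber False W"
  have W0: "lin_subspace m W0" using W by (simp add: W0_def lin_subspace_fiber_False)
  from W card show ?thesis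
  proof (cases rule: lin_subspace_fiber_True_cases)
    case empty
    then have c0: "card W0 = 2 ^ r" by (simp add: W0_def)
    then have e: "Suc m - r + j = m - r + Suc j" using lin_subspace_card_le[OF W0] by simp
    have "Y False \<in> BW (Suc j) m" unfolding Y_def e W0_def[symmetric] using IH W0 a c0 by blast
    moreover have "Y True = 0" using empty by (simp add: Y_def xvec_def fun_eq_iff)
    ultimately show ?thesis using BW_Suc_subset by simp
  next
    case (coset s r')
    then have "Suc m - r + j = m - r' + j" by simp
    moreover have "vadd a ` fiber True W = vadd (vadd a s) ` W0"
      using coset by (simp add: W0_def image_image vadd_assoc)
    ultimately have Y: "Y False \<in> BW j m" "Y True \<in> BW j m"
      unfolding Y_def W0_def[symmetric] using IH W0 a vadd_Vsp[OF a coset(1)] coset(4)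
      by (simp_all add: W0_def)
    have "Y True - Y False \<in> BW (Suc j) m"
    proof (cases "s \<in> W0")
      case True
      then show ?thesis using coset(2) lin_subspace_coset_self[OF W0] by (simp add: Y_def W0_def)
    next
      case False
      define W' where "W' = W0 \<union> fiber True W"
      have W': "lin_subspace m W'" using lin_subspace_fibers_Un[OF W] by (simp add: W'_def W0_def)
      have disj: "W0 \<inter> fiber True W = {}" using lin_subspace_coset_disjoint[OF W0 coset(1) False] coset(2) W0_def
        by simp
      then have "card W' = 2 ^ r"
        using W card card_fibers_Un[of W m] by (simp add: W'_def W0_def lin_subspace_def)
      then have e: "Suc m - r + j = m - r + Suc j" using lin_subspace_card_le[OF W'] by simp
      define YU where "YU = (\<lambda>v. 2 ^ ((Suc m - r + j) div 2) * xvec (vadd a ` W') v)"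
      have YU: "YU \<in> BW (Suc j) m"
        unfolding YU_def e using IH W' a \<open>card W' = 2 ^ r\<close> by blast
      have "YU = Y False + Y True"
        using scaled_xvec_translate_Un[OF a _ _ disj] W W0 fiber_subset_Vsp
        by (simp add: YU_def Y_def W'_def W0_def lin_subspace_def)
      then have "Y True - Y False = YU - 2 * Y False" by (simp add: fun_eq_iff)
      then show ?thesis using BW_diff[OF YU double_in_BW_Suc[OF Y(1)]] by (simp only:)
    qed
    with Y show ?thesis by blast
  qed
qed

lemma scaled_affine_indicator_in_BW_0:
  assumes W: "lin_subspace 0 W" and a: "a \<in> Vsp 0" and card: "card W = 2 ^ r"
  shows "(\<lambda>v. 2 ^ ((0 - r + j) div 2) * xvec (vadd a ` W) v) \<in> BW j 0"
proof -
  have "W = {[]}" "a = []" using W a by (auto simp: lin_subspace_def Vsp_def)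
  moreover from this have "r = 0" using card by (simp add: eq_commute[of "Suc 0"])
  ultimately show ?thesis by (auto simp: xvec_def fun_eq_iff intro!: exI[of _ 1])
qed

lemma scaled_affine_indicator_in_BW:
  assumes "lin_subspace m W" "a \<in> Vsp m" "card W = 2 ^ r"
  shows "(\<lambda>v. 2 ^ ((m - r + j) div 2) * xvec (vadd a ` W) v) \<in> BW j m"
proof -
  have "\<forall>j r a W. lin_subspace m W \<longrightarrow> a \<in> Vsp m \<longrightarrow> card W = 2 ^ r \<longrightarrow>
      (\<lambda>v. 2 ^ ((m - r + j) div 2) * xvec (vadd a ` W) v) \<in> BW j m"
  proof (induction m)
    case 0
    then show ?case using scaled_affine_indicator_in_BW_0 by blast
  next
    case (Suc m)
    show ?case
    proof (intro allI impI)
      fix j r a W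
      assume W: "lin_subspace (Suc m) W" and a: "a \<in> Vsp (Suc m)" and card: "card W = 2 ^ r"
      obtain a0 a' where a': "a = a0 # a'" "a' \<in> Vsp m" using a by (cases a) (auto simp: Vsp_def)
      define c :: real where "c = 2 ^ ((Suc m - r + j) div 2)"
      define Y where "Y b = (\<lambda>v. c * xvec (vadd a' ` fiber b W) v)" for b
      define y where "y = (\<lambda>v. c * xvec (vadd a ` W) v)"
      have "length (vadd a x) = Suc m" if "x \<in> W" for x
        using W a that by (auto simp: lin_subspace_def Vsp_def)
      then have "[] \<notin> vadd a ` W" by (metis imageE list.size(3) nat.distinct(1))
      then have "y [] = 0" by (simp add: y_def xvec_def)
      moreover have "slice b y = Y (a0 \<noteq> b)" for b
        using W fiber_translate[of W m b a0 a']
        by (simp add: y_def Y_def a'(1) slice_scaled_xvec lin_subspace_def)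
      moreover have "Y False \<in> BW j m \<and> Y True \<in> BW j m \<and> Y True - Y False \<in> BW (Suc j) m"
        using translated_fibers_in_BW[OF Suc.IH W a'(2) card] by (simp add: Y_def c_def)
      ultimately have "y \<in> BW j (Suc m)" using BW_diff_commute by (cases a0) auto
      then show "(\<lambda>v. 2 ^ ((Suc m - r + j) div 2) * xvec (vadd a ` W) v) \<in> BW j (Suc m)"
        by (simp add: y_def c_def)
    qed
  qed
  then show ?thesis using assms by blast
qed

subsection \<open>The Barnes-Wall lattices\<close>

lemma int_span_subset_BW:
  assumes "x \<in> int_span S" "S \<subseteq> BW j m"
  shows "x \<in> BW j m"
  using assms(1)
proof induction
  case zero
  then show ?case using zero_in_BW by (simp add: zero_fun_def)
next
  case (add x g)
  then show ?case using BW_add[of x j m g] assms(2) by (auto simp: plus_fun_def)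
next
  case (sub x g)
  then show ?case using BW_diff[of x j m g] assms(2) by (auto simp: fun_diff_def)
qed

lemma int_span_scaled_affine_indicators_subset_BW:
  "int_span {(\<lambda>v. 2 ^ ((m - r + j) div 2) * xvec U v) | r U. r \<le> m \<and> affine_subspace m r U}
    \<subseteq> BW j m"
proof
  fix x assume "x \<in> int_span {(\<lambda>v. 2 ^ ((m - r + j) div 2) * xvec U v) | r U.
    r \<le> m \<and> affine_subspace m r U}"
  then show "x \<in> BW j m"
  proof (rule int_span_subset_BW, safe)
    fix r U assume "affine_subspace m r U"
    then obtain a W where "a \<in> Vsp m" "lin_subspace m W" "card W = 2 ^ r" "U = vadd a ` W"
      by (auto simp: affine_subspace_def)
    then show "(\<lambda>v. 2 ^ ((m - r + j) div 2) * xvec U v) \<in> BW j m"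
      using scaled_affine_indicator_in_BW[of m W a r j] by simp
  qed
qed

lemma Lambda_BW_subset_BW: "Lambda_BW m \<subseteq> BW 0 m"
  using int_span_scaled_affine_indicators_subset_BW[of m 0] by (simp add: Lambda_BW_def)

lemma Delta_BW_subset_BW: "Delta_BW m \<subseteq> BW 1 m"
  using int_span_scaled_affine_indicators_subset_BW[of m 1] by (simp add: Delta_BW_def)

theorem lemma3p1:
  fixes m :: nat and l x :: "bool list \<Rightarrow> real"
  assumes "m \<ge> 1"
    and "l \<in> Lambda_BW m"
    and "inner_V m l l = 2 ^ (m - 1)"
    and "\<exists>d \<in> Delta_BW m. x = (\<lambda>v. l v + d v)"
  shows "inner_V m x x = inner_V m l l \<or> inner_V m x x \<ge> 2 ^ m"
proof -
  obtain d where d: "d \<in> Delta_BW m" and x: "x = l + d"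
    using assms(4) by (auto simp: plus_fun_def)
  have "bw_min 0 m = 2 ^ (m - 1)" using assms(1) by (simp add: bw_min_def power_diff)
  then have "bw_minimal 0 m l"
    using assms(2,3) Lambda_BW_subset_BW by (auto simp: bw_minimal_def sqnorm_def)
  moreover have "d \<in> BW (Suc 0) m" using d Delta_BW_subset_BW by auto
  ultimately have "sqnorm m x = bw_min 0 m \<or> 2 * bw_min 0 m \<le> sqnorm m x"
    unfolding x by (rule sqnorm_minimal_coset)
  then show ?thesis using assms(3) \<open>bw_min 0 m = 2 ^ (m - 1)\<close>
    by (simp add: sqnorm_def bw_min_def)
qed

end
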